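(* Let $q\ge2$, $k\ge1$, and let $\mathcal{A}$ be an automaton over $\mathrm{BS}(1,q)$. If $\rho$ is a run in $\mathsf{LeftRuns}_k(\mathcal{A})$, then $|\rho|/k<\mathsf{pmax}(\rho)+1$.
   Context: $\mathrm{BS}(1,q)$ is identified with $\mathbb{Z}[\tfrac1q]\rtimes\mathbb{Z}$ (pairs $(r,m)$ with $(r,m)(r',m')=(r+q^mr',m+m')$), with generating set $\Sigma=\{(1,0),(-1,0),(0,1),(0,-1)\}$. An automaton over $\mathrm{BS}(1,q)$ is $(Q,\Sigma,E,q_0,q_f)$ with $E\subseteq Q\times\Sigma\times Q$. A run $\rho=\rho_1\cdots\rho_\ell$ is a sequence of consecutive edges; $|\rho|=\ell$; its production $[\rho]$ is the product of its labels; it is accepting if it starts in $q_0$ and ends in $q_f$. If $[\rho]=(r,m)$, set $\mathrm{pos}(\rho)=m$; $\mathsf{pmax}(\rho)$ and $\mathsf{pmin}(\rho)$ are the maximum and minimum of $\mathrm{pos}(\pi)$ over prefixes $\pi$ of $\rho$. The run is returning-left if $\mathrm{pos}(\rho)=0$ and $\mathsf{pmin}(\rho)=0$. Its thickness is $\max_{z\in\mathbb{Z}}|\{i:\mathrm{pos}(\rho_1\cdots\rho_i)=z\}|$, and it is $k$-thin if its thickness is at most $k$. $\mathsf{LeftRuns}_k(\mathcal{A})$ is the set of accepting, $k$-thin, returning-left runs of $\mathcal{A}$. *)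

theory Defs
  imports Complex_Main
begin

text \<open>BS(1,q) as Z[1/q] \<rtimes> Z; elements (r,m) with r rational (in Z[1/q]).\<close>
type_synonym bs = "rat \<times> int"

definition bs_mult :: "nat \<Rightarrow> bs \<Rightarrow> bs \<Rightarrow> bs" where
  "bs_mult q x y = (fst x + (of_nat q) powi (snd x) * fst y, snd x + snd y)"

definition bs_one :: bs where "bs_one = (0, 0)"

definition Sigma_gen :: "bs set" where
  "Sigma_gen = {(1,0), (-1,0), (0,1), (0,-1)}"

definition automaton :: "'s set \<Rightarrow> ('s \<times> bs \<times> 's) set \<Rightarrow> 's \<Rightarrow> 's \<Rightarrow> bool" where
  "automaton Q E q0 qf \<longleftrightarrow> finite Q \<and> E \<subseteq> Q \<times> Sigma_gen \<times> Q \<and> q0 \<in> Q \<and> qf \<in> Q"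

definition is_run :: "('s \<times> bs \<times> 's) set \<Rightarrow> ('s \<times> bs \<times> 's) list \<Rightarrow> bool" where
  "is_run E \<rho> \<longleftrightarrow> set \<rho> \<subseteq> E \<and>
     (\<forall>i. Suc i < length \<rho> \<longrightarrow> snd (snd (\<rho> ! i)) = fst (\<rho> ! Suc i))"

definition accepting :: "'s \<Rightarrow> 's \<Rightarrow> ('s \<times> bs \<times> 's) list \<Rightarrow> bool" where
  "accepting q0 qf \<rho> \<longleftrightarrow>
     (if \<rho> = [] then q0 = qf else fst (hd \<rho>) = q0 \<and> snd (snd (last \<rho>)) = qf)"

definition production :: "nat \<Rightarrow> ('s \<times> bs \<times> 's) list \<Rightarrow> bs" where
  "production q \<rho> = foldl (\<lambda>g e. bs_mult q g (fst (snd e))) bs_one \<rho>"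

definition pos :: "nat \<Rightarrow> ('s \<times> bs \<times> 's) list \<Rightarrow> int" where
  "pos q \<rho> = snd (production q \<rho>)"

definition prefix_positions :: "nat \<Rightarrow> ('s \<times> bs \<times> 's) list \<Rightarrow> int set" where
  "prefix_positions q \<rho> = {pos q (take i \<rho>) | i. i \<le> length \<rho>}"

definition pmax :: "nat \<Rightarrow> ('s \<times> bs \<times> 's) list \<Rightarrow> int" where
  "pmax q \<rho> = Max (prefix_positions q \<rho>)"

definition pmin :: "nat \<Rightarrow> ('s \<times> bs \<times> 's) list \<Rightarrow> int" where
  "pmin q \<rho> = Min (prefix_positions q \<rho>)"

definition returning_left :: "nat \<Rightarrow> ('s \<times> bs \<times> 's) list \<Rightarrow> bool" where
  "returning_left q \<rho> \<longleftrightarrow> pos q \<rho> = 0 \<and> pmin q \<rho> = 0"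

text \<open>Thickness: max over z of the number of indices i (0 \<le> i \<le> |rho|) with pos(rho_1..rho_i) = z.
  Only values z that are positions of prefixes contribute a nonzero count.\<close>
definition visits :: "nat \<Rightarrow> ('s \<times> bs \<times> 's) list \<Rightarrow> int \<Rightarrow> nat" where
  "visits q \<rho> z = card {i. i \<le> length \<rho> \<and> pos q (take i \<rho>) = z}"

definition thickness :: "nat \<Rightarrow> ('s \<times> bs \<times> 's) list \<Rightarrow> nat" where
  "thickness q \<rho> = Max (visits q \<rho> ` prefix_positions q \<rho>)"

definition thin :: "nat \<Rightarrow> nat \<Rightarrow> ('s \<times> bs \<times> 's) list \<Rightarrow> bool" where
  "thin q k \<rho> \<longleftrightarrow> thickness q \<rho> \<le> k"

definition LeftRuns :: "nat \<Rightarrow> nat \<Rightarrow> 's set \<Rightarrow> ('s \<times> bs \<times> 's) set \<Rightarrow> 's \<Rightarrow> 's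
    \<Rightarrow> ('s \<times> bs \<times> 's) list set" where
  "LeftRuns q k Q E q0 qf =
     {\<rho>. is_run E \<rho> \<and> accepting q0 qf \<rho> \<and> thin q k \<rho> \<and> returning_left q \<rho>}"

end

theory Submission
  imports Defs
begin

text \<open>The \<open>|\<rho>| + 1\<close> prefixes of \<open>\<rho>\<close> have positions in the interval \<open>[pmin \<rho>, pmax \<rho>]\<close>, and
  by thinness each position is taken by at most \<open>k\<close> prefixes. By pigeonhole,
  \<open>|\<rho>| + 1 \<le> k (pmax \<rho> - pmin \<rho> + 1)\<close>, which for a returning-left run (\<open>pmin \<rho> = 0\<close>) is
  the claim. Neither \<open>q \<ge> 2\<close> nor the automaton structure of the run plays a role.\<close>

lemma prefix_positions_eq_image:
  "prefix_positions q \<rho> = (\<lambda>i. pos q (take i \<rho>)) ` {..length \<rho>}"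
  unfolding prefix_positions_def by auto

lemma finite_prefix_positions [simp]: "finite (prefix_positions q \<rho>)"
  by (simp add: prefix_positions_eq_image)

lemma prefix_positions_nonempty [simp]: "prefix_positions q \<rho> \<noteq> {}"
  by (simp add: prefix_positions_eq_image)

lemma prefix_positions_subset_pmin_pmax:
  "prefix_positions q \<rho> \<subseteq> {pmin q \<rho>..pmax q \<rho>}"
  unfolding pmin_def pmax_def by auto

lemma pmin_le_pmax: "pmin q \<rho> \<le> pmax q \<rho>"
  unfolding pmin_def pmax_def by (simp add: Min_le_iff)

lemma card_prefix_positions_le:
  "int (card (prefix_positions q \<rho>)) \<le> pmax q \<rho> - pmin q \<rho> + 1"
  using card_mono[OF _ prefix_positions_subset_pmin_pmax, of q \<rho>] pmin_le_pmax[of q \<rho>]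
  by simp

lemma visits_le_thickness:
  "z \<in> prefix_positions q \<rho> \<Longrightarrow> visits q \<rho> z \<le> thickness q \<rho>"
  unfolding thickness_def by simp

lemma length_le_card_prefix_positions_mult_thickness:
  "Suc (length \<rho>) \<le> card (prefix_positions q \<rho>) * thickness q \<rho>"
proof -
  let ?P = "prefix_positions q \<rho>"
  let ?visit = "\<lambda>z. {i. i \<le> length \<rho> \<and> pos q (take i \<rho>) = z}"
  have cover: "{..length \<rho>} = (\<Union>z\<in>?P. ?visit z)"
    by (auto simp: prefix_positions_eq_image)
  have "Suc (length \<rho>) = card {..length \<rho>}" by simp
  also have "\<dots> \<le> (\<Sum>z\<in>?P. card (?visit z))"
    unfolding cover by (rule card_UN_le) simp
  also have "\<dots> \<le> (\<Sum>z\<in>?P. thickness q \<rho>)"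
    using visits_le_thickness unfolding visits_def by (intro sum_mono) auto
  also have "\<dots> = card ?P * thickness q \<rho>" by simp
  finally show ?thesis .
qed

lemma length_le_width_mult_thickness:
  "int (Suc (length \<rho>)) \<le> (pmax q \<rho> - pmin q \<rho> + 1) * int (thickness q \<rho>)"
proof -
  have "int (Suc (length \<rho>)) \<le> int (card (prefix_positions q \<rho>)) * int (thickness q \<rho>)"
    using length_le_card_prefix_positions_mult_thickness by (metis of_nat_le_iff of_nat_mult)
  also have "\<dots> \<le> (pmax q \<rho> - pmin q \<rho> + 1) * int (thickness q \<rho>)"
    using card_prefix_positions_le by (rule mult_right_mono) simp
  finally show ?thesis .
qed

theorem mainTheorem12:
  fixes q k :: nat and Q :: "'s set" and E :: "('s \<times> bs \<times> 's) set"
    and q0 qf :: 's and \<rho> :: "('s \<times> bs \<times> 's) list"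
  assumes "q \<ge> 2" and "k \<ge> 1"
    and "automaton Q E q0 qf"
    and "\<rho> \<in> LeftRuns q k Q E q0 qf"
  shows "(of_nat (length \<rho>) :: rat) / of_nat k < of_int (pmax q \<rho>) + 1"
proof -
  have pmin: "pmin q \<rho> = 0" and thin: "thickness q \<rho> \<le> k"
    using assms(4) unfolding LeftRuns_def returning_left_def thin_def by auto
  have "pmax q \<rho> \<ge> 0"
    using pmin_le_pmax[of q \<rho>] pmin by simp
  moreover have "int (Suc (length \<rho>)) \<le> (pmax q \<rho> + 1) * int (thickness q \<rho>)"
    using length_le_width_mult_thickness[of \<rho> q] pmin by simp
  ultimately have "int (Suc (length \<rho>)) \<le> (pmax q \<rho> + 1) * int k"
    using thin by (meson mult_left_mono of_nat_le_iff order_trans add_nonneg_nonneg zero_le_one)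
  then have "rat_of_int (int (Suc (length \<rho>))) \<le> rat_of_int ((pmax q \<rho> + 1) * int k)"
    by (simp only: of_int_le_iff)
  then have "rat_of_nat (length \<rho>) < (of_int (pmax q \<rho>) + 1) * of_nat k"
    by simp
  then show ?thesis
    using assms(2) by (simp add: divide_less_eq)
qed

end
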